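(* Let $G$ be a graph and $r>2$ an integer. Then $$\rho_o(G)\leq \rho_o(G\square K_r)\leq \alpha_2(G).$$ Moreover, if $G$ is triangle-free and there is an $\alpha_2(G)$-set $S$ with $\chi(G/S)\leq r$, then $\rho_o(G\square K_r)=\alpha_2(G)$.
   Context: All graphs are finite and simple. An open packing of $G$ is a set $P\subseteq V(G)$ whose vertices have pairwise disjoint open neighborhoods; $\rho_o(G)$ is the maximum size of an open packing. A set $S\subseteq V(G)$ is $2$-independent if the induced subgraph $G[S]$ has maximum degree less than $2$ (i.e., $G[S]$ consists of isolated vertices and isolated edges); $\alpha_2(G)$ is the maximum size of a $2$-independent set, and an $\alpha_2(G)$-set is a $2$-independent set of that size. For a $2$-independent set $S$, the graph $G/S$ has as vertices the connected components of $G[S]$, two components $C,C'$ being adjacent iff $d_G(C,C')=2$, where $d_G(C,C')=\min\{d_G(x,y): x\in V(C), y\in V(C')\}$. $\chi$ denotes chromatic number, $K_r$ the complete graph on $r$ vertices. The Cartesian product $G\square H$ has vertex set $V(G)\times V(H)$, with $(g,h)$ adjacent to $(g',h')$ iff ($gg'\in E(G)$ and $h=h'$) or ($g=g'$ and $hh'\in E(H)$). *)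

theory Defs
  imports Main "HOL-Library.Extended_Nat"
begin

type_synonym 'a graph = "'a set \<times> ('a \<Rightarrow> 'a \<Rightarrow> bool)"

definition verts :: "'a graph \<Rightarrow> 'a set" where "verts G = fst G"
definition adj :: "'a graph \<Rightarrow> 'a \<Rightarrow> 'a \<Rightarrow> bool" where
  "adj G x y = (x \<in> verts G \<and> y \<in> verts G \<and> snd G x y)"

definition simple_graph :: "'a graph \<Rightarrow> bool" where
  "simple_graph G \<longleftrightarrow> finite (verts G) \<and>
     (\<forall>x y. snd G x y \<longrightarrow> x \<in> verts G \<and> y \<in> verts G) \<and>
     (\<forall>x y. snd G x y \<longrightarrow> snd G y x) \<and> (\<forall>x. \<not> snd G x x)"

definition open_nbhd :: "'a graph \<Rightarrow> 'a \<Rightarrow> 'a set" where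
  "open_nbhd G v = {u. adj G v u}"

definition open_packing :: "'a graph \<Rightarrow> 'a set \<Rightarrow> bool" where
  "open_packing G P \<longleftrightarrow> P \<subseteq> verts G \<and>
     (\<forall>x\<in>P. \<forall>y\<in>P. x \<noteq> y \<longrightarrow> open_nbhd G x \<inter> open_nbhd G y = {})"

definition rho_o :: "'a graph \<Rightarrow> nat" where
  "rho_o G = Max (card ` {P. open_packing G P})"

definition two_indep :: "'a graph \<Rightarrow> 'a set \<Rightarrow> bool" where
  "two_indep G S \<longleftrightarrow> S \<subseteq> verts G \<and> (\<forall>x\<in>S. card {y\<in>S. adj G x y} < 2)"

definition alpha2 :: "'a graph \<Rightarrow> nat" where
  "alpha2 G = Max (card ` {S. two_indep G S})"

definition alpha2_set :: "'a graph \<Rightarrow> 'a set \<Rightarrow> bool" where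
  "alpha2_set G S \<longleftrightarrow> two_indep G S \<and> card S = alpha2 G"

text \<open>Walks and distance (as extended natural; \<infinity> if no walk).\<close>
definition walk :: "'a graph \<Rightarrow> 'a list \<Rightarrow> bool" where
  "walk G xs \<longleftrightarrow> xs \<noteq> [] \<and> set xs \<subseteq> verts G \<and>
     (\<forall>i. Suc i < length xs \<longrightarrow> adj G (xs ! i) (xs ! Suc i))"

definition gdist :: "'a graph \<Rightarrow> 'a \<Rightarrow> 'a \<Rightarrow> enat" where
  "gdist G x y = Inf {enat (length xs - 1) | xs. walk G xs \<and> hd xs = x \<and> last xs = y}"

definition set_dist :: "'a graph \<Rightarrow> 'a set \<Rightarrow> 'a set \<Rightarrow> enat" where
  "set_dist G A B = Inf {gdist G x y | x y. x \<in> A \<and> y \<in> B}"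

definition induced_comps :: "'a graph \<Rightarrow> 'a set \<Rightarrow> 'a set set" where
  "induced_comps G S = {{y \<in> S. (\<lambda>a b. a \<in> S \<and> b \<in> S \<and> adj G a b)\<^sup>*\<^sup>* x y} | x. x \<in> S}"

definition quot_graph :: "'a graph \<Rightarrow> 'a set \<Rightarrow> 'a set graph" where
  "quot_graph G S = (induced_comps G S,
     \<lambda>C C'. C \<in> induced_comps G S \<and> C' \<in> induced_comps G S \<and> set_dist G C C' = 2)"

definition proper_colouring :: "'a graph \<Rightarrow> nat \<Rightarrow> ('a \<Rightarrow> nat) \<Rightarrow> bool" where
  "proper_colouring G k f \<longleftrightarrow> (\<forall>v\<in>verts G. f v < k) \<and> (\<forall>u v. adj G u v \<longrightarrow> f u \<noteq> f v)"

definition chromatic_number :: "'a graph \<Rightarrow> nat" where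
  "chromatic_number G = (LEAST k. \<exists>f. proper_colouring G k f)"

definition complete_graph :: "nat \<Rightarrow> nat graph" where
  "complete_graph r = ({0..<r}, \<lambda>i j. i < r \<and> j < r \<and> i \<noteq> j)"

definition cart_prod :: "'a graph \<Rightarrow> 'b graph \<Rightarrow> ('a \<times> 'b) graph" where
  "cart_prod G H = (verts G \<times> verts H,
     \<lambda>(g,h) (g',h'). (adj G g g' \<and> h = h' \<and> h \<in> verts H) \<or> (g = g' \<and> g \<in> verts G \<and> adj H h h'))"

definition triangle_free :: "'a graph \<Rightarrow> bool" where
  "triangle_free G \<longleftrightarrow> \<not> (\<exists>x y z. adj G x y \<and> adj G y z \<and> adj G x z)"

end

theory Submission
  imports Defs
begin

text \<open>
An open packing of \<open>G \<box> K\<^sub>r\<close> meets every fibre \<open>{g} \<times> K\<^sub>r\<close> at most once, because for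
\<open>r \<ge> 3\<close> two vertices of a fibre have a common neighbour in it; and if \<open>(g, i)\<close> and \<open>(g', j)\<close>
lie in the packing with \<open>g g'\<close> an edge then \<open>i = j\<close>, since otherwise \<open>(g', i)\<close> is a common
neighbour. Hence the projection of the packing to \<open>G\<close> is 2-independent, which gives the upper
bound; the lower bound lifts an open packing of \<open>G\<close> into one layer.
Conversely, given a 2-independent set \<open>S\<close> and a colouring of \<open>G/S\<close> with \<open>r\<close> colours, place
each component of \<open>G[S]\<close> into the layer of its colour. Two vertices of \<open>S\<close> that lie in
different components and have a common neighbour are at distance 2, so their components get
different colours; with triangle-freeness this makes the lifted set an open packing.
\<close>

lemma simple_graph_adj_sym: "simple_graph G \<Longrightarrow> adj G x y \<Longrightarrow> adj G y x"
  by (auto simp: simple_graph_def adj_def)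

lemma simple_graph_not_adj_self: "simple_graph G \<Longrightarrow> \<not> adj G x x"
  by (auto simp: simple_graph_def adj_def)

lemma adj_in_verts: "adj G x y \<Longrightarrow> x \<in> verts G \<and> y \<in> verts G"
  by (auto simp: adj_def)

lemma simple_graph_finite_verts: "simple_graph G \<Longrightarrow> finite (verts G)"
  by (simp add: simple_graph_def)

lemma simple_graph_complete_graph: "simple_graph (complete_graph r)"
  by (auto simp: simple_graph_def complete_graph_def verts_def)

lemma verts_complete_graph: "verts (complete_graph r) = {0..<r}"
  by (simp add: complete_graph_def verts_def)

lemma adj_complete_graph: "adj (complete_graph r) i j \<longleftrightarrow> i < r \<and> j < r \<and> i \<noteq> j"
  by (auto simp: adj_def complete_graph_def verts_def)

lemma verts_cart_prod: "verts (cart_prod G H) = verts G \<times> verts H"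
  by (simp add: cart_prod_def verts_def)

lemma adj_cart_prod:
  "adj (cart_prod G H) (g, h) (g', h') \<longleftrightarrow>
     (adj G g g' \<and> h = h' \<and> h \<in> verts H) \<or> (g = g' \<and> g \<in> verts G \<and> adj H h h')"
  by (auto simp: adj_def cart_prod_def verts_def)

lemma adj_cart_prod_complete:
  "adj (cart_prod G (complete_graph r)) (g, i) (g', j) \<longleftrightarrow>
     (adj G g g' \<and> i = j \<and> i < r) \<or> (g = g' \<and> g \<in> verts G \<and> i < r \<and> j < r \<and> i \<noteq> j)"
  by (auto simp: adj_cart_prod adj_complete_graph verts_complete_graph)

lemma open_packing_iff_no_common_nbr:
  "open_packing G P \<longleftrightarrow> P \<subseteq> verts G \<and>
     (\<forall>x\<in>P. \<forall>y\<in>P. \<forall>z. adj G x z \<longrightarrow> adj G y z \<longrightarrow> x = y)"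
  unfolding open_packing_def open_nbhd_def by blast

lemma two_indep_iff_unique_nbr:
  assumes "finite (verts G)"
  shows "two_indep G S \<longleftrightarrow> S \<subseteq> verts G \<and>
     (\<forall>x\<in>S. \<forall>y\<in>S. \<forall>z\<in>S. adj G x y \<longrightarrow> adj G x z \<longrightarrow> y = z)"
proof -
  have "card {y\<in>S. adj G x y} < 2 \<longleftrightarrow> (\<forall>y\<in>S. \<forall>z\<in>S. adj G x y \<longrightarrow> adj G x z \<longrightarrow> y = z)"
    if "S \<subseteq> verts G" for x
  proof -
    have "finite {y\<in>S. adj G x y}"
      using assms that by (auto intro: finite_subset)
    then have "card {y\<in>S. adj G x y} \<le> Suc 0 \<longleftrightarrow> (\<forall>y\<in>{y\<in>S. adj G x y}. \<forall>z\<in>{y\<in>S. adj G x y}. y = z)"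
      by (rule card_le_Suc0_iff_eq)
    then show ?thesis
      by (auto simp: numeral_2_eq_2 less_Suc_eq_le)
  qed
  then show ?thesis
    unfolding two_indep_def by blast
qed

lemma card_le_rho_o:
  assumes "finite (verts G)" "open_packing G P"
  shows "card P \<le> rho_o G"
proof -
  have "finite {P. open_packing G P}"
    using assms(1) by (rule finite_subset[rotated, OF finite_Pow_iff[THEN iffD2]])
      (auto simp: open_packing_def)
  then show ?thesis
    unfolding rho_o_def using assms(2) by (intro Max_ge) auto
qed

lemma rho_o_le:
  assumes "finite (verts G)" "\<And>P. open_packing G P \<Longrightarrow> card P \<le> n"
  shows "rho_o G \<le> n"
proof -
  have "finite {P. open_packing G P}"
    using assms(1) by (rule finite_subset[rotated, OF finite_Pow_iff[THEN iffD2]])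
      (auto simp: open_packing_def)
  moreover have "open_packing G {}"
    by (simp add: open_packing_def)
  ultimately show ?thesis
    unfolding rho_o_def using assms(2) by (subst Max_le_iff) auto
qed

lemma card_le_alpha2:
  assumes "finite (verts G)" "two_indep G S"
  shows "card S \<le> alpha2 G"
proof -
  have "finite {S. two_indep G S}"
    using assms(1) by (rule finite_subset[rotated, OF finite_Pow_iff[THEN iffD2]])
      (auto simp: two_indep_def)
  then show ?thesis
    unfolding alpha2_def using assms(2) by (intro Max_ge) auto
qed

subsection \<open>The lower bound by a layer of the product\<close>

lemma rho_o_le_rho_o_cart_prod:
  assumes G: "finite (verts G)" and H: "simple_graph H" "h \<in> verts H"
  shows "rho_o G \<le> rho_o (cart_prod G H)"
proof (rule rho_o_le[OF G])
  fix P assume P: "open_packing G P"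
  let ?Q = "(\<lambda>g. (g, h)) ` P"
  have "open_packing (cart_prod G H) ?Q"
    using P H simple_graph_not_adj_self[OF H(1)]
    unfolding open_packing_iff_no_common_nbr verts_cart_prod
    by (auto simp: adj_cart_prod)
  then have "card ?Q \<le> rho_o (cart_prod G H)"
    using G simple_graph_finite_verts[OF H(1)] by (intro card_le_rho_o) (auto simp: verts_cart_prod)
  moreover have "card ?Q = card P"
    by (rule card_image) (auto simp: inj_on_def)
  ultimately show "card P \<le> rho_o (cart_prod G H)"
    by simp
qed

subsection \<open>The upper bound by the projection of a packing\<close>

lemma open_packing_cart_prod_complete_inj_fst:
  assumes P: "open_packing (cart_prod G (complete_graph r)) P" and r: "3 \<le> r"
  shows "inj_on fst P"
proof (rule inj_onI, rule ccontr)
  fix p q assume pq: "p \<in> P" "q \<in> P" "fst p = fst q" "p \<noteq> q"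
  obtain g i j where p: "p = (g, i)" and q: "q = (g, j)" and "i \<noteq> j"
    using pq(3,4) by (cases p, cases q) auto
  have "g \<in> verts G" "i < r" "j < r"
    using P pq(1,2) unfolding p q by (auto simp: open_packing_def verts_cart_prod verts_complete_graph)
  have "\<exists>k::nat \<in> {0, 1, 2}. k \<noteq> i \<and> k \<noteq> j"
    by auto
  then obtain k where "k \<in> {0, 1, 2}" "k \<noteq> i" "k \<noteq> j"
    by blast
  moreover have "k < r" if "k \<in> {0, 1, 2}" for k :: nat
    using that r by auto
  ultimately have "adj (cart_prod G (complete_graph r)) p (g, k)" "adj (cart_prod G (complete_graph r)) q (g, k)"
    using \<open>g \<in> verts G\<close> \<open>i < r\<close> \<open>j < r\<close> unfolding p q adj_cart_prod_complete by auto
  then show False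
    using P pq unfolding open_packing_iff_no_common_nbr by blast
qed

lemma open_packing_cart_prod_complete_same_layer:
  assumes G: "simple_graph G" and P: "open_packing (cart_prod G (complete_graph r)) P"
    and "(g, i) \<in> P" "(g', j) \<in> P" "adj G g g'"
  shows "i = j"
proof (rule ccontr)
  assume "i \<noteq> j"
  have "i < r" "j < r" "g' \<in> verts G"
    using P assms(3-5) adj_in_verts
    by (auto simp: open_packing_def verts_cart_prod verts_complete_graph)
  then have "adj (cart_prod G (complete_graph r)) (g, i) (g', i)"
    "adj (cart_prod G (complete_graph r)) (g', j) (g', i)"
    using \<open>adj G g g'\<close> \<open>i \<noteq> j\<close> by (auto simp: adj_cart_prod_complete)
  then have "g = g'"
    using P assms(3,4) unfolding open_packing_iff_no_common_nbr by blast
  then show False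
    using \<open>adj G g g'\<close> simple_graph_not_adj_self[OF G] by simp
qed

lemma two_indep_fst_open_packing_cart_prod_complete:
  assumes G: "simple_graph G" and P: "open_packing (cart_prod G (complete_graph r)) P"
  shows "two_indep G (fst ` P)"
  unfolding two_indep_iff_unique_nbr[OF simple_graph_finite_verts[OF G]]
proof (intro conjI ballI impI)
  show "fst ` P \<subseteq> verts G"
    using P by (auto simp: open_packing_def verts_cart_prod)
next
  fix g g1 g2 assume "g \<in> fst ` P" "g1 \<in> fst ` P" "g2 \<in> fst ` P" and adj: "adj G g g1" "adj G g g2"
  then obtain i i1 i2 where in_P: "(g, i) \<in> P" "(g1, i1) \<in> P" "(g2, i2) \<in> P"
    by force
  have "i1 = i" "i2 = i"
    using open_packing_cart_prod_complete_same_layer[OF G P] in_P adj by (metis)+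
  moreover have "i < r"
    using P in_P by (auto simp: open_packing_def verts_cart_prod verts_complete_graph)
  ultimately have "adj (cart_prod G (complete_graph r)) (g1, i1) (g, i)"
    "adj (cart_prod G (complete_graph r)) (g2, i2) (g, i)"
    using adj simple_graph_adj_sym[OF G] by (auto simp: adj_cart_prod_complete)
  then show "g1 = g2"
    using P in_P unfolding open_packing_iff_no_common_nbr by blast
qed

lemma rho_o_cart_prod_complete_le_alpha2:
  assumes G: "simple_graph G" and r: "3 \<le> r"
  shows "rho_o (cart_prod G (complete_graph r)) \<le> alpha2 G"
proof (rule rho_o_le)
  show "finite (verts (cart_prod G (complete_graph r)))"
    using G by (simp add: verts_cart_prod verts_complete_graph simple_graph_finite_verts)
next
  fix P assume P: "open_packing (cart_prod G (complete_graph r)) P"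
  have "card P = card (fst ` P)"
    using open_packing_cart_prod_complete_inj_fst[OF P r] by (simp add: card_image)
  also have "\<dots> \<le> alpha2 G"
    using two_indep_fst_open_packing_cart_prod_complete[OF G P]
    by (intro card_le_alpha2 simple_graph_finite_verts G)
  finally show "card P \<le> alpha2 G" .
qed

lemma gdist_self: "x \<in> verts G \<Longrightarrow> gdist G x x = 0"
proof -
  assume "x \<in> verts G"
  then have "walk G [x]"
    by (simp add: walk_def)
  then have "gdist G x x \<le> enat 0"
    unfolding gdist_def by (intro Inf_lower) force
  then show ?thesis
    by (simp add: zero_enat_def[symmetric])
qed

lemma gdist_le_2:
  assumes "adj G x z" "adj G z y"
  shows "gdist G x y \<le> 2"
proof -
  have "walk G [x, z, y]"
    unfolding walk_def
  proof (intro conjI allI impI)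
    fix i assume "Suc i < length [x, z, y]"
    then have "i = 0 \<or> i = 1"
      by auto
    then show "adj G ([x, z, y] ! i) ([x, z, y] ! Suc i)"
      using assms by auto
  qed (use adj_in_verts[OF assms(1)] adj_in_verts[OF assms(2)] in auto)
  then have "gdist G x y \<le> enat (length [x, z, y] - 1)"
    unfolding gdist_def by (intro Inf_lower) force
  then show ?thesis
    by (simp add: numeral_eq_enat eval_nat_numeral)
qed

lemma two_le_gdist:
  assumes "x \<noteq> y" "\<not> adj G x y"
  shows "2 \<le> gdist G x y"
  unfolding gdist_def
proof (rule Inf_greatest, clarify)
  fix xs assume xs: "walk G xs" "x = hd xs" "y = last xs"
  then have "xs \<noteq> []"
    by (simp add: walk_def)
  have "length xs \<noteq> 1"
  proof
    assume "length xs = 1"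
    then have "hd xs = last xs"
      using \<open>xs \<noteq> []\<close> by (simp add: hd_conv_nth last_conv_nth)
    then show False
      using xs assms(1) by simp
  qed
  moreover have "length xs \<noteq> 2"
  proof
    assume "length xs = 2"
    then have "adj G (xs ! 0) (xs ! 1)" "hd xs = xs ! 0" "last xs = xs ! 1"
      using xs(1) \<open>xs \<noteq> []\<close> by (simp_all add: walk_def hd_conv_nth last_conv_nth)
    then show False
      using xs assms(2) by simp
  qed
  moreover have "length xs \<noteq> 0"
    using \<open>xs \<noteq> []\<close> by simp
  ultimately have "2 \<le> length xs - 1"
    by linarith
  then show "2 \<le> enat (length xs - 1)"
    by (simp add: numeral_eq_enat)
qed

lemma set_dist_le_gdist: "x \<in> A \<Longrightarrow> y \<in> B \<Longrightarrow> set_dist G A B \<le> gdist G x y"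
  unfolding set_dist_def by (intro Inf_lower) blast

lemma two_le_set_dist:
  assumes "\<And>x y. x \<in> A \<Longrightarrow> y \<in> B \<Longrightarrow> x \<noteq> y \<and> \<not> adj G x y"
  shows "2 \<le> set_dist G A B"
  unfolding set_dist_def
proof (rule Inf_greatest, clarify)
  fix x y assume "x \<in> A" "y \<in> B"
  with assms show "2 \<le> gdist G x y"
    by (simp add: two_le_gdist)
qed

subsection \<open>Components of a 2-independent set and the graph \<open>G/S\<close>\<close>

abbreviation induced_adj :: "'a graph \<Rightarrow> 'a set \<Rightarrow> 'a \<Rightarrow> 'a \<Rightarrow> bool" where
  "induced_adj G S \<equiv> \<lambda>a b. a \<in> S \<and> b \<in> S \<and> adj G a b"

definition induced_comp :: "'a graph \<Rightarrow> 'a set \<Rightarrow> 'a \<Rightarrow> 'a set" where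
  "induced_comp G S x = {y \<in> S. (induced_adj G S)\<^sup>*\<^sup>* x y}"

lemma induced_comps_eq_image: "induced_comps G S = induced_comp G S ` S"
  unfolding induced_comps_def induced_comp_def by blast

lemma verts_quot_graph: "verts (quot_graph G S) = induced_comp G S ` S"
  by (simp add: quot_graph_def verts_def induced_comps_eq_image)

lemma induced_adj_rtranclp_sym:
  "simple_graph G \<Longrightarrow> (induced_adj G S)\<^sup>*\<^sup>* x y \<Longrightarrow> (induced_adj G S)\<^sup>*\<^sup>* y x"
  by (rule sympD[OF symp_rtranclp]) (auto intro: sympI simple_graph_adj_sym)

lemma induced_adj_rtranclp_two_indep:
  assumes G: "simple_graph G" and S: "two_indep G S"
    and "(induced_adj G S)\<^sup>*\<^sup>* v w"
  shows "v = w \<or> induced_adj G S v w"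
  using assms(3)
proof (induction rule: rtranclp_induct)
  case (step y z)
  then show ?case
    using S simple_graph_adj_sym[OF G]
    unfolding two_indep_iff_unique_nbr[OF simple_graph_finite_verts[OF G]] by blast
qed simp

lemma induced_comp_eq:
  assumes "simple_graph G" "induced_adj G S v w"
  shows "induced_comp G S v = induced_comp G S w"
proof -
  have "(induced_adj G S)\<^sup>*\<^sup>* v w" "(induced_adj G S)\<^sup>*\<^sup>* w v"
    using assms simple_graph_adj_sym by fastforce+
  then show ?thesis
    unfolding induced_comp_def by (blast intro: rtranclp_trans)
qed

lemma quot_graph_not_adj_self:
  assumes "S \<subseteq> verts G"
  shows "\<not> adj (quot_graph G S) C C"
proof
  assume "adj (quot_graph G S) C C"
  then obtain x where x: "x \<in> S" "C = induced_comp G S x" and "set_dist G C C = 2"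
    by (auto simp: adj_def quot_graph_def induced_comps_eq_image)
  moreover have "set_dist G C C \<le> gdist G x x"
    using x by (intro set_dist_le_gdist) (auto simp: induced_comp_def)
  ultimately show False
    using assms gdist_self[of x G] by auto
qed

lemma adj_quot_graph_induced_comp:
  assumes G: "simple_graph G" and S: "two_indep G S"
    and vw: "v \<in> S" "w \<in> S" "v \<noteq> w" "\<not> adj G v w" and x: "adj G v x" "adj G w x"
  shows "adj (quot_graph G S) (induced_comp G S v) (induced_comp G S w)"
proof -
  have "a \<noteq> b \<and> \<not> adj G a b" if "a \<in> induced_comp G S v" "b \<in> induced_comp G S w" for a b
  proof -
    have "(induced_adj G S)\<^sup>*\<^sup>* v a" "(induced_adj G S)\<^sup>*\<^sup>* b w" "a \<in> S" "b \<in> S"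
      using that induced_adj_rtranclp_sym[OF G] by (auto simp: induced_comp_def)
    then have "(induced_adj G S)\<^sup>*\<^sup>* v w" if "a = b \<or> adj G a b"
      using that by (blast intro: rtranclp_trans)
    then show ?thesis
      using induced_adj_rtranclp_two_indep[OF G S] vw by blast
  qed
  then have "2 \<le> set_dist G (induced_comp G S v) (induced_comp G S w)"
    by (rule two_le_set_dist)
  moreover have "set_dist G (induced_comp G S v) (induced_comp G S w) \<le> gdist G v w"
    using vw by (intro set_dist_le_gdist) (auto simp: induced_comp_def)
  moreover have "gdist G v w \<le> 2"
    using x simple_graph_adj_sym[OF G] by (blast intro: gdist_le_2)
  ultimately show ?thesis
    using vw by (auto simp: adj_def quot_graph_def verts_def induced_comps_eq_image)
qed

lemma proper_colouring_chromatic_number: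
  assumes "finite (verts H)" "\<And>v. \<not> adj H v v"
  shows "\<exists>f. proper_colouring H (chromatic_number H) f"
proof -
  obtain h where h: "bij_betw h (verts H) {0..<card (verts H)}"
    using ex_bij_betw_finite_nat[OF assms(1)] by blast
  have "proper_colouring H (card (verts H)) h"
    unfolding proper_colouring_def
  proof (intro conjI ballI allI impI)
    fix v assume "v \<in> verts H"
    then have "h v \<in> {0..<card (verts H)}"
      using bij_betwE[OF h] by blast
    then show "h v < card (verts H)"
      by simp
  next
    fix u v assume uv: "adj H u v"
    then have "u \<noteq> v"
      using assms(2) by blast
    moreover have "u \<in> verts H" "v \<in> verts H"
      using adj_in_verts[OF uv] by simp_all
    ultimately show "h u \<noteq> h v"
      using inj_onD[OF bij_betw_imp_inj_on[OF h]] by blast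
  qed
  then have "\<exists>k f. proper_colouring H k f"
    by blast
  then show ?thesis
    unfolding chromatic_number_def by (rule LeastI_ex)
qed

subsection \<open>Lifting a 2-independent set along a colouring\<close>

lemma open_packing_cart_prod_complete_of_colouring:
  assumes G: "simple_graph G" "triangle_free G" and S: "S \<subseteq> verts G"
    and c_lt: "\<And>v. v \<in> S \<Longrightarrow> c v < r"
    and c_adj: "\<And>v w. v \<in> S \<Longrightarrow> w \<in> S \<Longrightarrow> adj G v w \<Longrightarrow> c v = c w"
    and c_dist2: "\<And>v w x. v \<in> S \<Longrightarrow> w \<in> S \<Longrightarrow> v \<noteq> w \<Longrightarrow> \<not> adj G v w \<Longrightarrow>
                           adj G v x \<Longrightarrow> adj G w x \<Longrightarrow> c v \<noteq> c w"
  shows "open_packing (cart_prod G (complete_graph r)) ((\<lambda>v. (v, c v)) ` S)"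
  unfolding open_packing_iff_no_common_nbr
proof (intro conjI ballI allI impI)
  show "(\<lambda>v. (v, c v)) ` S \<subseteq> verts (cart_prod G (complete_graph r))"
    using S c_lt by (auto simp: verts_cart_prod verts_complete_graph)
next
  fix p q z
  assume "p \<in> (\<lambda>v. (v, c v)) ` S" "q \<in> (\<lambda>v. (v, c v)) ` S"
    and z: "adj (cart_prod G (complete_graph r)) p z" "adj (cart_prod G (complete_graph r)) q z"
  then obtain v w x k where vw: "v \<in> S" "w \<in> S" and pqz: "p = (v, c v)" "q = (w, c w)" "z = (x, k)"
    by (cases z) blast
  note z = z[unfolded pqz adj_cart_prod_complete]
  consider (both) "adj G v x" "adj G w x" "k = c v" "k = c w"
    | (edge) "adj G v w \<or> adj G w v" "c v \<noteq> c w"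
    | (same) "v = w"
    using z by auto
  then show "p = q"
  proof cases
    case both
    have "\<not> adj G v w"
      using G(2) both unfolding triangle_free_def by blast
    then have "v = w"
      using c_dist2[OF vw _ _ both(1,2)] both(3,4) by blast
    then show ?thesis
      using pqz by simp
  next
    case edge
    then show ?thesis
      using c_adj[OF vw] c_adj[OF vw(2,1)] by auto
  qed (simp add: pqz)
qed

lemma card_le_rho_o_cart_prod_complete:
  assumes G: "simple_graph G" "triangle_free G" and S: "two_indep G S"
    and chi: "chromatic_number (quot_graph G S) \<le> r"
  shows "card S \<le> rho_o (cart_prod G (complete_graph r))"
proof -
  have fin: "finite (verts G)" and SV: "S \<subseteq> verts G"
    using G S by (auto simp: simple_graph_finite_verts two_indep_def)
  have "finite (verts (quot_graph G S))"
    using finite_subset[OF SV fin] by (simp add: verts_quot_graph)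
  then obtain f where f: "proper_colouring (quot_graph G S) (chromatic_number (quot_graph G S)) f"
    using proper_colouring_chromatic_number quot_graph_not_adj_self[OF SV] by metis
  define c where "c v = f (induced_comp G S v)" for v
  have "open_packing (cart_prod G (complete_graph r)) ((\<lambda>v. (v, c v)) ` S)"
  proof (rule open_packing_cart_prod_complete_of_colouring[OF G SV])
    show "c v < r" if "v \<in> S" for v
    proof -
      have "induced_comp G S v \<in> verts (quot_graph G S)"
        using that by (simp add: verts_quot_graph)
      then show ?thesis
        using f chi unfolding c_def proper_colouring_def by fastforce
    qed
    show "c v = c w" if "v \<in> S" "w \<in> S" "adj G v w" for v w
      using that unfolding c_def by (simp add: induced_comp_eq[OF G(1)])
    show "c v \<noteq> c w" if "v \<in> S" "w \<in> S" "v \<noteq> w" "\<not> adj G v w" "adj G v x" "adj G w x" for v w x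
      using adj_quot_graph_induced_comp[OF G(1) S that] f
      unfolding c_def proper_colouring_def by blast
  qed
  then have "card ((\<lambda>v. (v, c v)) ` S) \<le> rho_o (cart_prod G (complete_graph r))"
    using fin by (intro card_le_rho_o) (simp add: verts_cart_prod verts_complete_graph)
  then show ?thesis
    by (simp add: card_image inj_on_def)
qed

theorem mainTheorem6:
  fixes G :: "'a graph" and r :: nat
  assumes "simple_graph G" and "r > 2"
  shows "rho_o G \<le> rho_o (cart_prod G (complete_graph r))
       \<and> rho_o (cart_prod G (complete_graph r)) \<le> alpha2 G
       \<and> ((triangle_free G \<and> (\<exists>S. alpha2_set G S \<and> chromatic_number (quot_graph G S) \<le> r))
            \<longrightarrow> rho_o (cart_prod G (complete_graph r)) = alpha2 G)"
proof (intro conjI impI)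
  show "rho_o G \<le> rho_o (cart_prod G (complete_graph r))"
    using assms simple_graph_complete_graph
    by (intro rho_o_le_rho_o_cart_prod) (auto simp: simple_graph_finite_verts verts_complete_graph)
  show upper: "rho_o (cart_prod G (complete_graph r)) \<le> alpha2 G"
    using assms by (intro rho_o_cart_prod_complete_le_alpha2) auto
  assume "triangle_free G \<and> (\<exists>S. alpha2_set G S \<and> chromatic_number (quot_graph G S) \<le> r)"
  then obtain S where "triangle_free G" "two_indep G S" "card S = alpha2 G"
    "chromatic_number (quot_graph G S) \<le> r"
    by (auto simp: alpha2_set_def)
  then have "alpha2 G \<le> rho_o (cart_prod G (complete_graph r))"
    using card_le_rho_o_cart_prod_complete[OF assms(1)] by metis
  with upper show "rho_o (cart_prod G (complete_graph r)) = alpha2 G"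
    by simp
qed

end
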